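(* Assume $\beta S\le Z$ almost surely (in particular under $(\beta,\alpha)$-bounded estimates). Then for every $z>0$, $$u_{\mathrm{SRPT\text{-}B}}(z)-u_{\mathrm{SRPT\text{-}SE}}(z)\le 3z\max\{1-\beta,0\}\,\mathbb{E}[S\mathbf 1(Z>z)].$$
   Context: $(S,Z)$ is a random pair of positive reals (true size and estimated size of a random job), and $0<\beta\le\alpha$ are constants. Rank functions on job states $(s,z,a)$ with age $a\in[0,s)$: SRPT-B: $r(s,z,a)=\min\{|z-a|,z\}$; SRPT-SE: $r(s,z,a)=\frac{z}{s}(s-a)$. For a policy $\pi$ with rank function $r_\pi$, $u_\pi(x)=\mathbb{E}\big[\,\big|\{a\in[0,S): r_\pi(S,Z,a)\le x\}\big|^2\big]$, where $|\cdot|$ is Lebesgue measure. *)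

theory Defs
  imports "HOL-Probability.Probability"
begin

text \<open>Rank functions r(s,z,a) on job states (true size s, estimate z, age a).\<close>

definition srpt_b_rank :: "real \<Rightarrow> real \<Rightarrow> real \<Rightarrow> real" where
  "srpt_b_rank s z a = min \<bar>z - a\<bar> z"

definition srpt_se_rank :: "real \<Rightarrow> real \<Rightarrow> real \<Rightarrow> real" where
  "srpt_se_rank s z a = z / s * (s - a)"

definition rank_level_set ::
  "(real \<Rightarrow> real \<Rightarrow> real \<Rightarrow> real) \<Rightarrow> real \<Rightarrow> real \<Rightarrow> real \<Rightarrow> real set" where
  "rank_level_set r s z x = {a \<in> {0..<s}. r s z a \<le> x}"

definition u_rank ::
  "'w measure \<Rightarrow> ('w \<Rightarrow> real) \<Rightarrow> ('w \<Rightarrow> real) \<Rightarrow> (real \<Rightarrow> real \<Rightarrow> real \<Rightarrow> real) \<Rightarrow> real \<Rightarrow> ennreal"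
  where
  "u_rank M S Z r x = (\<integral>\<^sup>+ \<omega>. (emeasure lborel (rank_level_set r (S \<omega>) (Z \<omega>) x))\<^sup>2 \<partial>M)"

end

theory Submission
  imports Defs
begin

text \<open>The bound holds pointwise, for every job with \<beta> S \<le> Z, and is then integrated.
  The SRPT-SE rank Z (S - a) / S decreases linearly from Z to 0, so it is at most z on a final
  interval of ages of length min(S, S z / Z). For z < Z the SRPT-B rank min(|Z - a|, Z) is at
  most z only for ages in [Z - z, min(S, Z + z)]. When S \<le> Z this interval is no longer than
  S z / Z; when S > Z its length is at most min(2z, S - Z + z), whose square exceeds z^2 by at
  most 3z(S - Z) \<le> 3z(1 - \<beta>)S.\<close>

lemma srpt_se_level_set:
  assumes "s > 0" "w > 0"
  shows "rank_level_set srpt_se_rank s w x = {max 0 (s - s * x / w)..<s}"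
proof (rule set_eqI)
  fix a
  have "w / s * (s - a) \<le> x \<longleftrightarrow> s - s * x / w \<le> a"
    using assms by (simp add: field_simps)
  then show "a \<in> rank_level_set srpt_se_rank s w x \<longleftrightarrow> a \<in> {max 0 (s - s * x / w)..<s}"
    unfolding rank_level_set_def srpt_se_rank_def by auto
qed

lemma emeasure_srpt_se_level_set:
  assumes "s > 0" "w > 0" "x \<ge> 0"
  shows "emeasure lborel (rank_level_set srpt_se_rank s w x) = ennreal (min s (s * x / w))"
proof -
  have "max 0 (s - s * x / w) \<le> s"
    using assms by simp
  moreover have "s - max 0 (s - s * x / w) = min s (s * x / w)"
    by linarith
  ultimately show ?thesis
    using assms by (simp add: srpt_se_level_set)
qed

lemma srpt_b_level_set_large:
  assumes "w \<le> x"
  shows "rank_level_set srpt_b_rank s w x = {0..<s}"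
  using assms unfolding rank_level_set_def srpt_b_rank_def by auto

lemma emeasure_srpt_b_level_set_le:
  assumes "x < w"
  shows "emeasure lborel (rank_level_set srpt_b_rank s w x)
           \<le> ennreal (max 0 (min s (w + x) - (w - x)))"
proof -
  have "rank_level_set srpt_b_rank s w x \<subseteq> {w - x..min s (w + x)}"
    using assms unfolding rank_level_set_def srpt_b_rank_def by auto
  then have "emeasure lborel (rank_level_set srpt_b_rank s w x)
               \<le> emeasure lborel {w - x..min s (w + x)}"
    by (intro emeasure_mono) auto
  also have "\<dots> = ennreal (max 0 (min s (w + x) - (w - x)))"
    by (simp add: emeasure_lborel_Icc_eq max_def)
  finally show ?thesis .
qed

lemma min_double_sq_le:
  fixes d x :: real
  assumes "0 \<le> d" "0 \<le> x"
  shows "(min (2 * x) (d + x))\<^sup>2 \<le> x\<^sup>2 + 3 * x * d"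
proof (cases "x \<le> d")
  case True
  then have "x * x \<le> x * d" using assms by (intro mult_left_mono)
  then show ?thesis using True by (simp add: power2_eq_square min_def)
next
  case False
  then have "d * d \<le> d * x" using assms by (intro mult_left_mono) auto
  then show ?thesis using False by (simp add: power2_eq_square algebra_simps min_def)
qed

lemma srpt_b_interval_sq_le:
  fixes s w x \<beta> :: real
  assumes "s > 0" "x > 0" "x < w" "\<beta> * s \<le> w"
  shows "(max 0 (min s (w + x) - (w - x)))\<^sup>2 \<le> (s * x / w)\<^sup>2 + 3 * x * max (1 - \<beta>) 0 * s"
proof (cases "s \<le> w")
  case True
  have "(s - w) * (w - x) \<le> 0"
    using True assms by (intro mult_nonpos_nonneg) auto
  then have "s - w + x \<le> s * x / w"
    using assms by (simp add: field_simps)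
  then have "max 0 (min s (w + x) - (w - x)) \<le> s * x / w"
    using assms by auto
  then have "(max 0 (min s (w + x) - (w - x)))\<^sup>2 \<le> (s * x / w)\<^sup>2"
    by (intro power_mono) auto
  moreover have "0 \<le> 3 * x * max (1 - \<beta>) 0 * s"
    using assms by simp
  ultimately show ?thesis by linarith
next
  case False
  have interval: "max 0 (min s (w + x) - (w - x)) = min (2 * x) (s - w + x)"
    using False assms by auto
  have "s - w \<le> (1 - \<beta>) * s"
    using assms by (simp add: algebra_simps)
  also have "\<dots> \<le> max (1 - \<beta>) 0 * s"
    using assms by (intro mult_right_mono) auto
  finally have "3 * x * (s - w) \<le> 3 * x * (max (1 - \<beta>) 0 * s)"
    using assms by (intro mult_left_mono) auto
  moreover have "x \<le> s * x / w"
    using False assms by (simp add: field_simps)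
  then have "x\<^sup>2 \<le> (s * x / w)\<^sup>2"
    using assms by (intro power_mono) auto
  moreover have "(min (2 * x) (s - w + x))\<^sup>2 \<le> x\<^sup>2 + 3 * x * (s - w)"
    using False assms min_double_sq_le[of "s - w" x] by (simp add: add.commute)
  ultimately show ?thesis unfolding interval by linarith
qed

lemma emeasure_srpt_b_level_set_sq_le:
  fixes s w x \<beta> :: real
  assumes "s > 0" "w > 0" "x > 0" "\<beta> * s \<le> w"
  shows "(emeasure lborel (rank_level_set srpt_b_rank s w x))\<^sup>2
           \<le> (emeasure lborel (rank_level_set srpt_se_rank s w x))\<^sup>2
             + ennreal (3 * x * max (1 - \<beta>) 0) * ennreal (s * indicator {x<..} w)"
proof (cases "w \<le> x")
  case True
  then have "s \<le> s * x / w"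
    using assms by (simp add: field_simps)
  then have "emeasure lborel (rank_level_set srpt_b_rank s w x)
               = emeasure lborel (rank_level_set srpt_se_rank s w x)"
    using True assms by (simp add: srpt_b_level_set_large emeasure_srpt_se_level_set)
  then show ?thesis
    by (intro add_increasing2) auto
next
  case False
  let ?c = "3 * x * max (1 - \<beta>) 0"
  have "s * x / w \<le> s"
    using False assms by (simp add: field_simps)
  then have se: "emeasure lborel (rank_level_set srpt_se_rank s w x) = ennreal (s * x / w)"
    using assms by (simp add: emeasure_srpt_se_level_set)
  have tail: "s * indicator {x<..} w = s"
    using False by simp
  have "(emeasure lborel (rank_level_set srpt_b_rank s w x))\<^sup>2
          \<le> (ennreal (max 0 (min s (w + x) - (w - x))))\<^sup>2"
    using False by (intro power_mono emeasure_srpt_b_level_set_le) auto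
  also have "\<dots> = ennreal ((max 0 (min s (w + x) - (w - x)))\<^sup>2)"
    by (subst ennreal_power) auto
  also have "\<dots> \<le> ennreal ((s * x / w)\<^sup>2 + ?c * s)"
    using False assms by (intro ennreal_leI srpt_b_interval_sq_le) auto
  also have "\<dots> = ennreal ((s * x / w)\<^sup>2) + ennreal (?c * s)"
    using assms by (intro ennreal_plus) auto
  also have "\<dots> = (ennreal (s * x / w))\<^sup>2 + ennreal ?c * ennreal s"
  proof -
    have "ennreal ((s * x / w)\<^sup>2) = (ennreal (s * x / w))\<^sup>2"
      using assms by (intro ennreal_power[symmetric]) simp
    moreover have "ennreal (?c * s) = ennreal ?c * ennreal s"
      using assms by (intro ennreal_mult) auto
    ultimately show ?thesis by simp
  qed
  finally show ?thesis
    unfolding se tail .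
qed

theorem mainTheorem9:
  fixes M :: "'w measure" and S Z :: "'w \<Rightarrow> real" and \<alpha> \<beta> z :: real
  assumes "prob_space M"
    and "S \<in> borel_measurable M" and "Z \<in> borel_measurable M"
    and "\<And>\<omega>. \<omega> \<in> space M \<Longrightarrow> S \<omega> > 0 \<and> Z \<omega> > 0"
    and "0 < \<beta>" and "\<beta> \<le> \<alpha>"
    and "AE \<omega> in M. \<beta> * S \<omega> \<le> Z \<omega>"
    and "z > 0"
  shows "u_rank M S Z srpt_b_rank z
           \<le> u_rank M S Z srpt_se_rank z
             + ennreal (3 * z * max (1 - \<beta>) 0)
               * (\<integral>\<^sup>+ \<omega>. ennreal (S \<omega> * indicator {z<..} (Z \<omega>)) \<partial>M)"
proof -
  let ?se = "\<lambda>\<omega>. emeasure lborel (rank_level_set srpt_se_rank (S \<omega>) (Z \<omega>) z)"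
  let ?c = "ennreal (3 * z * max (1 - \<beta>) 0)"
  let ?tail = "\<lambda>\<omega>. ennreal (S \<omega> * indicator {z<..} (Z \<omega>))"
  have se_eq: "?se \<omega> = ennreal (min (S \<omega>) (S \<omega> * z / Z \<omega>))" if "\<omega> \<in> space M" for \<omega>
    using assms(4)[OF that] assms(8) by (simp add: emeasure_srpt_se_level_set)
  have "u_rank M S Z srpt_b_rank z \<le> (\<integral>\<^sup>+ \<omega>. (?se \<omega>)\<^sup>2 + ?c * ?tail \<omega> \<partial>M)"
    unfolding u_rank_def using assms(4,7,8)
    by (intro nn_integral_mono_AE) (auto intro: emeasure_srpt_b_level_set_sq_le)
  also have "\<dots> = (\<integral>\<^sup>+ \<omega>. (?se \<omega>)\<^sup>2 \<partial>M) + ?c * (\<integral>\<^sup>+ \<omega>. ?tail \<omega> \<partial>M)"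
    using assms(2,3) by (simp add: se_eq nn_integral_add nn_integral_cmult cong: nn_integral_cong)
  finally show ?thesis
    unfolding u_rank_def .
qed

end
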